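(* The system $(X,\hat T)$ has zero topological entropy.
   Context: Let $\tau:\mathbb N\to(0,\infty)$ be non-increasing with $\tau(n)\to0$. Fix integers $2\le q_1<q_2<\cdots$ such that for every $k\ge1$: (i) $q_{k+1}>q_k^4+3q_k$; (ii) $\tau(\lceil q_{k+1}/3\rceil)<\frac1{16q_k}$. For $k\ge1$ put $q^{(0)}_k=q_{2k}$, $q^{(1)}_k=q_{2k+1}$, $q^{(2)}_k=q^{(0)}_k-1$, $q^{(3)}_k=q^{(1)}_k-1$, and $L^{(i)}_k=\lfloor q^{(i)}_{k+1}/(3q^{(i)}_k)\rfloor$. Let $s^{(i)}_k\in\{-1,0,1\}^{\mathbb N}$ (indices $n\ge1$) be given by $s^{(i)}_k(n)=1$ if $n=jq^{(i)}_k$ with $1\le j\le L^{(i)}_k$, $s^{(i)}_k(n)=-1$ if $n=jq^{(i)}_k$ with $L^{(i)}_k<j\le2L^{(i)}_k$, and $s^{(i)}_k(n)=0$ otherwise. For $w\in\{-1,0,1\}^{\mathbb N}$ and $p\in\mathbb N_0$ let $\sigma^{-p}w$ be defined by $(\sigma^{-p}w)(n)=0$ for $1\le n\le p$ and $(\sigma^{-p}w)(n)=w(n-p)$ for $n>p$. For $l\le m$ write $w|_l^m=(w_l,\dots,w_m)$. Let $R^{(i)}_k=\{(\sigma^{-p}s^{(i)}_k)|_{q^{(i)}_k}^{q^{(i)}_{k+1}-1}:p=0,1,\dots,q^{(i)}_k\}$ and $P^{(i)}=\{y\in\{-1,0,1\}^{\mathbb N}: y(n)=0\text{ for }1\le n<q^{(i)}_1,\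 y|_{q^{(i)}_k}^{q^{(i)}_{k+1}-1}\in R^{(i)}_k\text{ for all }k\ge1\}$. Let $Z=\{-1,0,1\}^{\mathbb N}\times\{-1,0,1\}^{\mathbb Z}$, where each factor carries the metric $d(u,v)=3^{-\min\{|m|:u_m\neq v_m\}}$ and $Z$ the maximum of the two. $\sigma$ is the left shift $(\sigma u)_m=u_{m+1}$ (invertible on $\{-1,0,1\}^{\mathbb Z}$). Define $T:Z\to Z$, $T(y,z)=(\sigma y,\sigma^{y_1}z)$, and $X_i=\overline{\bigcup_{n\ge0}T^n(P^{(i)}\times\{-1,0,1\}^{\mathbb Z})}$ for $i\in\{0,1,2,3\}$. Let $X=X_0\times X_1\times X_2\times X_3\times\{0,1,2,3\}$ with $\hat T(p^{(0)},p^{(1)},p^{(2)},p^{(3)},i)=(Tp^{(0)},Tp^{(1)},Tp^{(2)},Tp^{(3)},i)$. *)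

theory Defs
  imports "HOL-Analysis.Analysis"
begin

definition separated_set ::
  "('a \<Rightarrow> 'a \<Rightarrow> real) \<Rightarrow> ('a \<Rightarrow> 'a) \<Rightarrow> 'a set \<Rightarrow> nat \<Rightarrow> real \<Rightarrow> 'a set \<Rightarrow> bool" where
  "separated_set d f K n \<epsilon> S \<longleftrightarrow> S \<subseteq> K \<and> finite S \<and>
     (\<forall>x\<in>S. \<forall>y\<in>S. x \<noteq> y \<longrightarrow> (\<exists>i<n. \<epsilon> < d ((f ^^ i) x) ((f ^^ i) y)))"

definition max_sep ::
  "('a \<Rightarrow> 'a \<Rightarrow> real) \<Rightarrow> ('a \<Rightarrow> 'a) \<Rightarrow> 'a set \<Rightarrow> nat \<Rightarrow> real \<Rightarrow> nat" where
  "max_sep d f K n \<epsilon> = Sup {card S | S. separated_set d f K n \<epsilon> S}"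

definition topological_entropy ::
  "('a \<Rightarrow> 'a \<Rightarrow> real) \<Rightarrow> ('a \<Rightarrow> 'a) \<Rightarrow> 'a set \<Rightarrow> ereal" where
  "topological_entropy d f K =
     (SUP \<epsilon>\<in>{0<..}. limsup (\<lambda>n. ereal (ln (real (max_sep d f K n \<epsilon>)) / real n)))"

text \<open>One-sided sequences indexed by n \<ge> 1 are functions nat \<Rightarrow> int with the
  convention y 0 = 0; two-sided sequences are functions int \<Rightarrow> int.\<close>

definition trits1 :: "(nat \<Rightarrow> int) set" where
  "trits1 = {y. y 0 = 0 \<and> (\<forall>n. y n \<in> {-1, 0, 1})}"

definition trits2 :: "(int \<Rightarrow> int) set" where
  "trits2 = {z. \<forall>m. z m \<in> {-1, 0, 1}}"

definition d1 :: "(nat \<Rightarrow> int) \<Rightarrow> (nat \<Rightarrow> int) \<Rightarrow> real" where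
  "d1 u v = (if u = v then 0 else (1/3) ^ (LEAST m. u m \<noteq> v m))"

definition d2 :: "(int \<Rightarrow> int) \<Rightarrow> (int \<Rightarrow> int) \<Rightarrow> real" where
  "d2 u v = (if u = v then 0 else (1/3) ^ (LEAST k::nat. \<exists>m. \<bar>m\<bar> = int k \<and> u m \<noteq> v m))"

type_synonym zpt = "(nat \<Rightarrow> int) \<times> (int \<Rightarrow> int)"

definition Zsp :: "zpt set" where
  "Zsp = trits1 \<times> trits2"

definition dZ :: "zpt \<Rightarrow> zpt \<Rightarrow> real" where
  "dZ a b = max (d1 (fst a) (fst b)) (d2 (snd a) (snd b))"

definition shl1 :: "(nat \<Rightarrow> int) \<Rightarrow> (nat \<Rightarrow> int)" where
  "shl1 y = (\<lambda>n. if n = 0 then 0 else y (n + 1))"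

definition shl2 :: "int \<Rightarrow> (int \<Rightarrow> int) \<Rightarrow> (int \<Rightarrow> int)" where
  "shl2 j z = (\<lambda>m. z (m + j))"

definition Tmap :: "zpt \<Rightarrow> zpt" where
  "Tmap p = (shl1 (fst p), shl2 (fst p 1) (snd p))"

definition closureZ :: "zpt set \<Rightarrow> zpt set" where
  "closureZ A = {x \<in> Zsp. \<forall>e>0. \<exists>a\<in>A. dZ x a < e}"

definition qq :: "(nat \<Rightarrow> nat) \<Rightarrow> nat \<Rightarrow> nat \<Rightarrow> nat" where
  "qq q i k = (if i = 0 then q (2*k) else if i = 1 then q (2*k+1)
               else if i = 2 then q (2*k) - 1 else q (2*k+1) - 1)"

definition LL :: "(nat \<Rightarrow> nat) \<Rightarrow> nat \<Rightarrow> nat \<Rightarrow> nat" where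
  "LL q i k = qq q i (Suc k) div (3 * qq q i k)"

definition sk :: "(nat \<Rightarrow> nat) \<Rightarrow> nat \<Rightarrow> nat \<Rightarrow> nat \<Rightarrow> int" where
  "sk q i k n =
     (if n \<ge> 1 \<and> qq q i k dvd n \<and> 1 \<le> n div qq q i k \<and> n div qq q i k \<le> LL q i k then 1
      else if n \<ge> 1 \<and> qq q i k dvd n \<and> LL q i k < n div qq q i k \<and> n div qq q i k \<le> 2 * LL q i k then -1
      else 0)"

definition shr :: "nat \<Rightarrow> (nat \<Rightarrow> int) \<Rightarrow> (nat \<Rightarrow> int)" where
  "shr p w = (\<lambda>n. if n \<le> p then 0 else w (n - p))"

definition restr :: "(nat \<Rightarrow> int) \<Rightarrow> nat \<Rightarrow> nat \<Rightarrow> int list" where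
  "restr w l m = map w [l..<Suc m]"

definition RR :: "(nat \<Rightarrow> nat) \<Rightarrow> nat \<Rightarrow> nat \<Rightarrow> int list set" where
  "RR q i k = {restr (shr p (sk q i k)) (qq q i k) (qq q i (Suc k) - 1) | p. p \<le> qq q i k}"

definition PP :: "(nat \<Rightarrow> nat) \<Rightarrow> nat \<Rightarrow> (nat \<Rightarrow> int) set" where
  "PP q i = {y \<in> trits1. (\<forall>n. 1 \<le> n \<and> n < qq q i 1 \<longrightarrow> y n = 0) \<and>
              (\<forall>k\<ge>1. restr y (qq q i k) (qq q i (Suc k) - 1) \<in> RR q i k)}"

definition XX :: "(nat \<Rightarrow> nat) \<Rightarrow> nat \<Rightarrow> zpt set" where
  "XX q i = closureZ (\<Union>n. (Tmap ^^ n) ` (PP q i \<times> trits2))"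

type_synonym xpt = "zpt \<times> zpt \<times> zpt \<times> zpt \<times> nat"

definition Xhat :: "(nat \<Rightarrow> nat) \<Rightarrow> xpt set" where
  "Xhat q = {(a, b, c, e, i). a \<in> XX q 0 \<and> b \<in> XX q 1 \<and> c \<in> XX q 2 \<and> e \<in> XX q 3 \<and> i \<in> {0, 1, 2, 3}}"

definition That :: "xpt \<Rightarrow> xpt" where
  "That = (\<lambda>(a, b, c, e, i). (Tmap a, Tmap b, Tmap c, Tmap e, i))"

definition dX :: "xpt \<Rightarrow> xpt \<Rightarrow> real" where
  "dX = (\<lambda>(a, b, c, e, i) (a', b', c', e', i').
          max (max (dZ a a') (dZ b b')) (max (max (dZ c c') (dZ e e')) (if i = i' then 0 else 1)))"

end

theory Submission
  imports Defs
begin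

text \<open>On a window of length M the first coordinate of a point of X_i agrees with a window
  of some y in P^(i). Such a window meets at most log2 M + 2 of the blocks [q_k, q_(k+1)) of
  the i-th subsequence, and on each of them y is a signed arithmetic progression described by
  five numbers of size at most M + 1; hence there are only exp(O(log^2 M)) such words.
  After i steps the second coordinate has been shifted by y_1 + ... + y_i. Blocks below k0
  lie in [1, q_k0) and a block k \<ge> k0 contributes at most i / q_k + 1, so for i < n these
  partial sums are bounded by G = q_k0 + 2n / 2^k0 + O(log n). An (n, \<epsilon>)-separated set is
  therefore determined by y on [1, n + r] and by z on [-(G + r), G + r], whence
  ln(max_sep n \<epsilon>) \<le> O(log^2 n) + C(k0, \<epsilon>) + 32 n / 2^k0. Dividing by n and letting
  k0 \<rightarrow> \<infinity> shows that the entropy vanishes.\<close>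

section \<open>Entropy bounds by counting\<close>

lemma topological_entropy_eq_0I:
  assumes small: "\<And>\<epsilon> \<delta>. 0 < \<epsilon> \<Longrightarrow> 0 < \<delta> \<Longrightarrow>
    eventually (\<lambda>n. ln (real (max_sep d f K n \<epsilon>)) / real n \<le> \<delta>) sequentially"
  shows "topological_entropy d f K = 0"
proof -
  have "limsup (\<lambda>n. ereal (ln (real (max_sep d f K n \<epsilon>)) / real n)) = 0" if "0 < \<epsilon>" for \<epsilon>
  proof (rule antisym)
    show "limsup (\<lambda>n. ereal (ln (real (max_sep d f K n \<epsilon>)) / real n)) \<le> 0"
    proof (rule ereal_le_epsilon2)
      fix \<delta> :: real assume "0 < \<delta>"
      then have "limsup (\<lambda>n. ereal (ln (real (max_sep d f K n \<epsilon>)) / real n)) \<le> ereal \<delta>"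
        by (intro Limsup_bounded) (use small[OF \<open>0 < \<epsilon>\<close>] in simp)
      then show "limsup (\<lambda>n. ereal (ln (real (max_sep d f K n \<epsilon>)) / real n)) \<le> 0 + ereal \<delta>"
        by simp
    qed
    have "0 \<le> ln (real (max_sep d f K n \<epsilon>))" for n
      by (cases "max_sep d f K n \<epsilon> = 0") auto
    then show "0 \<le> limsup (\<lambda>n. ereal (ln (real (max_sep d f K n \<epsilon>)) / real n))"
      by (intro le_Limsup) (simp_all add: always_eventually)
  qed
  then have "(\<lambda>\<epsilon>. limsup (\<lambda>n. ereal (ln (real (max_sep d f K n \<epsilon>)) / real n))) ` {0<..}
      = (\<lambda>_. 0) ` ({0<..} :: real set)"
    by (intro image_cong) auto
  moreover have "({0<..} :: real set) \<noteq> {}" by auto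
  ultimately show ?thesis
    unfolding topological_entropy_def by simp
qed

lemma max_sep_le_card_code:
  assumes "finite C" "\<phi> ` K \<subseteq> C"
    and close: "\<And>x x' i. x \<in> K \<Longrightarrow> x' \<in> K \<Longrightarrow> \<phi> x = \<phi> x' \<Longrightarrow> i < n \<Longrightarrow>
      d ((f ^^ i) x) ((f ^^ i) x') \<le> \<epsilon>"
  shows "max_sep d f K n \<epsilon> \<le> card C"
proof -
  have "card S \<le> card C" if "separated_set d f K n \<epsilon> S" for S
  proof -
    from that have SK: "S \<subseteq> K"
      and sep: "\<forall>x\<in>S. \<forall>x'\<in>S. x \<noteq> x' \<longrightarrow> (\<exists>i<n. \<epsilon> < d ((f ^^ i) x) ((f ^^ i) x'))"
      by (auto simp: separated_set_def)
    have "inj_on \<phi> S"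
    proof (rule inj_onI, rule ccontr)
      fix x x' assume "x \<in> S" "x' \<in> S" "\<phi> x = \<phi> x'" "x \<noteq> x'"
      with sep SK close show False by (meson not_le subsetD)
    qed
    then have "card S = card (\<phi> ` S)" by (simp add: card_image)
    also have "\<dots> \<le> card C" using assms(1,2) SK by (intro card_mono) auto
    finally show ?thesis .
  qed
  moreover have "{card S | S. separated_set d f K n \<epsilon> S} \<noteq> {}"
    by (auto simp: separated_set_def intro!: exI[of _ "{}"])
  ultimately show ?thesis unfolding max_sep_def by (intro cSup_least) auto
qed

lemma ln_sq_div_tendsto_0: "(\<lambda>n. (ln (real (n + c)))^2 / real n) \<longlonglongrightarrow> 0"
proof -
  have "(\<lambda>n. ln (real n) / real n powr (1/2)) \<longlonglongrightarrow> 0" by (rule lim_ln_over_power) simp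
  then have "(\<lambda>n. (ln (real (n + c)) / real (n + c) powr (1/2))^2) \<longlonglongrightarrow> 0"
    using LIMSEQ_ignore_initial_segment tendsto_power[of _ 0 sequentially 2] by fastforce
  then have "(\<lambda>n. (ln (real (n + c)) / real (n + c) powr (1/2))^2 * (1 + real c * inverse (real n)))
      \<longlonglongrightarrow> 0 * (1 + real c * 0)"
    by (intro tendsto_intros lim_inverse_n)
  moreover have "eventually (\<lambda>n. (ln (real (n + c)) / real (n + c) powr (1/2))^2 * (1 + real c * inverse (real n))
      = (ln (real (n + c)))^2 / real n) sequentially"
  proof (rule eventually_sequentiallyI[of 1])
    fix n :: nat assume "1 \<le> n"
    then have "0 < real (n + c)" by simp
    then have "(real (n + c) powr (1/2))^2 = real (n + c)" by (simp add: powr_half_sqrt)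
    then show "(ln (real (n + c)) / real (n + c) powr (1/2))^2 * (1 + real c * inverse (real n))
      = (ln (real (n + c)))^2 / real n" using \<open>1 \<le> n\<close> by (simp add: power_divide divide_simps)
  qed
  ultimately show ?thesis by (simp add: Lim_transform_eventually)
qed

lemma eventually_ln_sq_div_le:
  fixes c :: nat and A B \<delta> :: real
  assumes "0 < \<delta>"
  shows "eventually (\<lambda>n. (A + B * (ln (real (n + c)))^2) / real n \<le> \<delta>) sequentially"
proof -
  have "(\<lambda>n. A * inverse (real n) + B * ((ln (real (n + c)))^2 / real n)) \<longlonglongrightarrow> A * 0 + B * 0"
    by (intro tendsto_intros lim_inverse_n ln_sq_div_tendsto_0)
  then have "(\<lambda>n. (A + B * (ln (real (n + c)))^2) / real n) \<longlonglongrightarrow> 0"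
    by (simp add: field_simps add_divide_distrib)
  from order_tendstoD(2)[OF this assms] show ?thesis
    by (rule eventually_mono) simp
qed

section \<open>Orbits of the skew product and cylinder distances\<close>

lemma Tmap_funpow:
  assumes "y 0 = 0"
  shows "(Tmap ^^ i) (y, z) = ((\<lambda>n. if n = 0 then 0 else y (n + i)), shl2 (\<Sum>t\<in>{1..i}. y t) z)"
proof (induction i)
  case (Suc i)
  have "(\<Sum>t\<in>{1..Suc i}. y t) = (\<Sum>t\<in>{1..i}. y t) + y (Suc i)"
    by (simp add: sum.cl_ivl_Suc)
  with Suc show ?case
    by (auto simp: Tmap_def shl1_def shl2_def algebra_simps intro!: ext)
qed (use assms in \<open>auto simp: shl2_def\<close>)

lemma That_funpow:
  "(That ^^ i) (a, b, c, e, j) = ((Tmap ^^ i) a, (Tmap ^^ i) b, (Tmap ^^ i) c, (Tmap ^^ i) e, j)"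
  by (induction i) (auto simp: That_def)

lemma d1_less_pow_imp_eq:
  assumes "d1 u v < (1/3)^M" "m \<le> M"
  shows "u m = v m"
proof (rule ccontr)
  assume ne: "u m \<noteq> v m"
  then have "u \<noteq> v" by auto
  then have "(1/3::real)^(LEAST m. u m \<noteq> v m) < (1/3)^M"
    using assms(1) by (simp add: d1_def)
  then have "M < (LEAST m. u m \<noteq> v m)" by (simp add: power_strict_decreasing_iff)
  with Least_le[of "\<lambda>m. u m \<noteq> v m", OF ne] assms(2) show False by simp
qed

lemma d1_le_pow_if_eq_upto:
  assumes "\<forall>m\<le>r. u m = v m"
  shows "d1 u v \<le> (1/3)^(Suc r)"
proof (cases "u = v")
  case False
  then obtain m where "u m \<noteq> v m" by auto
  then have "u (LEAST m. u m \<noteq> v m) \<noteq> v (LEAST m. u m \<noteq> v m)" by (rule LeastI)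
  then have "Suc r \<le> (LEAST m. u m \<noteq> v m)" using assms by (meson not_less_eq_eq)
  then have "(1/3::real)^(LEAST m. u m \<noteq> v m) \<le> (1/3)^(Suc r)" by (intro power_decreasing) auto
  then show ?thesis using False by (simp add: d1_def)
qed (simp add: d1_def)

lemma d2_le_pow_if_eq_within:
  assumes "\<forall>m. \<bar>m\<bar> \<le> int r \<longrightarrow> u m = v m"
  shows "d2 u v \<le> (1/3)^(Suc r)"
proof (cases "u = v")
  case False
  define P where "P k \<longleftrightarrow> (\<exists>m. \<bar>m\<bar> = int k \<and> u m \<noteq> v m)" for k
  obtain m where "u m \<noteq> v m" using False by auto
  then have "P (nat \<bar>m\<bar>)" by (auto simp: P_def)
  then have "P (LEAST k. P k)" by (rule LeastI)
  then have "Suc r \<le> (LEAST k. P k)" using assms unfolding P_def by force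
  then have "(1/3::real)^(LEAST k. P k) \<le> (1/3)^(Suc r)" by (intro power_decreasing) auto
  then show ?thesis using False by (simp add: d2_def P_def)
qed (simp add: d2_def)

lemma XX_memD:
  assumes "(y, z) \<in> XX q c"
  shows "y \<in> trits1" "z \<in> trits2"
    "\<exists>y0\<in>PP q c. \<exists>a. \<forall>t. 1 \<le> t \<longrightarrow> t \<le> M \<longrightarrow> y t = y0 (a + t)"
proof -
  have "(y, z) \<in> Zsp"
    and close: "\<forall>e>0. \<exists>x\<in>(\<Union>n. (Tmap ^^ n) ` (PP q c \<times> trits2)). dZ (y, z) x < e"
    using assms by (auto simp: XX_def closureZ_def)
  then show "y \<in> trits1" "z \<in> trits2" by (auto simp: Zsp_def)
  obtain j y0 z0 where y0: "y0 \<in> PP q c" and "dZ (y, z) ((Tmap ^^ j) (y0, z0)) < (1/3)^M"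
    using close[rule_format, of "(1/3)^M"] by auto
  moreover have "y0 0 = 0" using y0 by (auto simp: PP_def trits1_def)
  ultimately have close_j: "d1 y (\<lambda>n. if n = 0 then 0 else y0 (n + j)) < (1/3)^M"
    by (simp add: dZ_def Tmap_funpow)
  have "\<forall>t. 1 \<le> t \<longrightarrow> t \<le> M \<longrightarrow> y t = y0 (j + t)"
    using d1_less_pow_imp_eq[OF close_j] by (simp add: add.commute)
  with y0 show "\<exists>y0\<in>PP q c. \<exists>a. \<forall>t. 1 \<le> t \<longrightarrow> t \<le> M \<longrightarrow> y t = y0 (a + t)" by blast
qed

section \<open>Signed arithmetic progressions and dyadic scales\<close>

text \<open>Seen through a window of length M, a shifted block of P^(i) is a signed progression
  with all five parameters (modulus, residue, start, sign change, end) at most M + 1.\<close>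

definition signed_progression :: "nat \<times> nat \<times> nat \<times> nat \<times> nat \<Rightarrow> nat \<Rightarrow> int" where
  "signed_progression = (\<lambda>(d, \<rho>, u, v, w) t.
     if t mod d = \<rho> \<and> u \<le> t \<and> t \<le> w then (if t \<le> v then 1 else -1) else 0)"

definition progression_params :: "nat \<Rightarrow> (nat \<times> nat \<times> nat \<times> nat \<times> nat) set" where
  "progression_params M = {0..M+1} \<times> {0..M+1} \<times> {0..M+1} \<times> {0..M+1} \<times> {0..M+1}"

lemma finite_progression_params: "finite (progression_params M)"
  by (simp add: progression_params_def)

lemma card_progression_params: "card (progression_params M) = (M + 2) ^ 5"
  by (simp add: progression_params_def card_cartesian_product eval_nat_numeral)

lemma mod_add_left_cancel_nat: "((a::nat) + x) mod Q = (a + y) mod Q \<longleftrightarrow> x mod Q = y mod Q"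
  by (simp add: nat_mod_eq_iff)

lemma mod_add_eq_iff_mod_eq:
  fixes Q a p t :: nat
  assumes "1 \<le> Q"
  shows "(a + t) mod Q = p mod Q \<longleftrightarrow> t mod Q = (p + Q - a mod Q) mod Q"
proof -
  have "a mod Q < Q" using assms by simp
  then have "a mod Q + (p + Q - a mod Q) = p + Q" by simp
  then have "(a + (p + Q - a mod Q) mod Q) mod Q = p mod Q"
    by (metis mod_add_left_eq mod_add_right_eq mod_add_self2)
  then show ?thesis by (metis mod_add_left_cancel_nat mod_mod_trivial)
qed

lemma shifted_signed_progression:
  fixes Q p a lo hi B M :: nat
  assumes "1 \<le> Q"
  shows "\<exists>\<theta>\<in>progression_params M. \<forall>t. 1 \<le> t \<longrightarrow> t \<le> M \<longrightarrow>
     (if (a+t) mod Q = p mod Q \<and> lo \<le> a+t \<and> a+t \<le> hi then (if a+t \<le> B then 1 else -1) else (0::int))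
       = signed_progression \<theta> t"
proof -
  define \<rho> where "\<rho> = (p + Q - a mod Q) mod Q"
  define \<theta> where "\<theta> = (min Q (M+1), min \<rho> (M+1), min (M+1) (lo - a), min M (B - a), min M (hi - a))"
  have "\<theta> \<in> progression_params M" by (auto simp: \<theta>_def progression_params_def)
  moreover have "(if (a+t) mod Q = p mod Q \<and> lo \<le> a+t \<and> a+t \<le> hi then (if a+t \<le> B then 1 else -1)
      else (0::int)) = signed_progression \<theta> t" if t: "1 \<le> t" "t \<le> M" for t
  proof -
    have "(a + t) mod Q = p mod Q \<longleftrightarrow> t mod Q = \<rho>"
      using mod_add_eq_iff_mod_eq[OF assms] by (simp add: \<rho>_def)
    moreover have "t mod Q = \<rho> \<longleftrightarrow> t mod (min Q (M+1)) = min \<rho> (M+1)"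
    proof (cases "Q \<le> M + 1")
      case True
      moreover have "\<rho> < Q" using assms by (simp add: \<rho>_def)
      ultimately show ?thesis by simp
    qed (use t in auto)
    moreover have "lo \<le> a + t \<longleftrightarrow> min (M+1) (lo - a) \<le> t" "a + t \<le> hi \<longleftrightarrow> t \<le> min M (hi - a)"
      "a + t \<le> B \<longleftrightarrow> t \<le> min M (B - a)"
      using t by auto
    ultimately show ?thesis unfolding signed_progression_def \<theta>_def by auto
  qed
  ultimately show ?thesis by blast
qed

lemma card_residue_class_le:
  fixes Q a c i :: nat
  assumes "1 \<le> Q"
  shows "card {t\<in>{1..i}. (a + t) mod Q = c} \<le> i div Q + 1"
proof -
  let ?S = "{t\<in>{1..i}. (a + t) mod Q = c}"
  have "inj_on (\<lambda>t. t div Q) ?S"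
  proof (rule inj_onI)
    fix x y assume "x \<in> ?S" "y \<in> ?S" and div: "x div Q = y div Q"
    then have "(a + x) mod Q = (a + y) mod Q" by simp
    then have "x mod Q = y mod Q" by (simp only: mod_add_left_cancel_nat)
    with div show "x = y" by (metis div_mult_mod_eq)
  qed
  then have "card ?S = card ((\<lambda>t. t div Q) ` ?S)" by (simp add: card_image)
  also have "\<dots> \<le> card {0..i div Q}" by (intro card_mono) (auto intro: div_le_mono)
  finally show ?thesis by simp
qed

lemma abs_sum_le_card_nonzero:
  fixes f :: "'a \<Rightarrow> real"
  assumes "finite A" "\<And>t. \<bar>f t\<bar> \<le> 1"
  shows "\<bar>\<Sum>t\<in>A. f t\<bar> \<le> card {t\<in>A. f t \<noteq> 0}"
proof -
  have "(\<Sum>t\<in>A. f t) = (\<Sum>t\<in>{t\<in>A. f t \<noteq> 0}. f t)"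
    using assms(1) by (intro sum.mono_neutral_cong_right) auto
  also have "\<bar>\<dots>\<bar> \<le> (\<Sum>t\<in>{t\<in>A. f t \<noteq> 0}. \<bar>f t\<bar>)" by (rule sum_abs)
  also have "\<dots> \<le> (\<Sum>t\<in>{t\<in>A. f t \<noteq> 0}. 1)" using assms(2) by (intro sum_mono) auto
  finally show ?thesis by simp
qed

definition dyadic_scales :: "nat \<Rightarrow> nat" where
  "dyadic_scales M = card {k. 1 \<le> k \<and> 2 ^ k \<le> M}"

lemma two_pow_le_imp_le: "2 ^ k \<le> (M::nat) \<Longrightarrow> k \<le> M"
  using less_exp[of k] by linarith

lemma finite_dyadic_scales: "finite {k. 1 \<le> k \<and> 2 ^ k \<le> (M::nat)}"
  by (rule finite_subset[of _ "{..M}"]) (auto dest: two_pow_le_imp_le)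

lemma dyadic_scales_mono: "m \<le> n \<Longrightarrow> dyadic_scales m \<le> dyadic_scales n"
  unfolding dyadic_scales_def by (intro card_mono finite_dyadic_scales) auto

lemma dyadic_scales_le_ln:
  assumes "1 \<le> m"
  shows "real (dyadic_scales m) \<le> 2 * ln (real m)"
proof -
  have ln2: "1/2 \<le> ln (2::real)" using ln_ge_iff[of 2 "1/2"] exp_half_le2 by simp
  have "{k. 1 \<le> k \<and> 2 ^ k \<le> m} \<subseteq> {1..nat \<lfloor>2 * ln (real m)\<rfloor>}"
  proof
    fix k assume k: "k \<in> {k. 1 \<le> k \<and> 2 ^ k \<le> m}"
    then have "(2::real) ^ k \<le> real m"
      by (metis (mono_tags) mem_Collect_eq of_nat_le_iff of_nat_numeral of_nat_power)
    then have "real k * ln 2 \<le> ln (real m)" using assms by (simp add: ln_realpow[symmetric])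
    moreover have "real k * (1/2) \<le> real k * ln 2" using ln2 by (intro mult_left_mono) auto
    ultimately have "real k \<le> 2 * ln (real m)" by simp
    then show "k \<in> {1..nat \<lfloor>2 * ln (real m)\<rfloor>}" using k by (simp add: le_nat_floor)
  qed
  then have "dyadic_scales m \<le> nat \<lfloor>2 * ln (real m)\<rfloor>"
    unfolding dyadic_scales_def using card_mono[of "{1..nat \<lfloor>2 * ln (real m)\<rfloor>}"] by simp
  moreover have "0 \<le> ln (real m)" using assms by simp
  ultimately show ?thesis by linarith
qed

section \<open>The block structure of P^(i)\<close>

definition block_part :: "(nat \<Rightarrow> nat) \<Rightarrow> nat \<Rightarrow> nat \<Rightarrow> (nat \<Rightarrow> int) \<Rightarrow> nat \<Rightarrow> int" where
  "block_part q c k y n = (if qq q c k \<le> n \<and> n < qq q c (Suc k) then y n else 0)"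

locale fast_growing =
  fixes q :: "nat \<Rightarrow> nat"
  assumes q_1_ge_2: "2 \<le> q 1" and q_Suc_gt: "1 \<le> k \<Longrightarrow> 4 * q k < q (Suc k)"
begin

lemma q_ge_2: "1 \<le> k \<Longrightarrow> 2 \<le> q k"
proof (induction k rule: dec_induct)
  case (step n)
  then show ?case using q_Suc_gt[of n] by simp
qed (use q_1_ge_2 in simp)

lemma qq_ge_2:
  assumes "1 \<le> k"
  shows "2 \<le> qq q c k"
proof -
  have "4 * q (2*k - 1) < q (2*k)" "4 * q (2*k) < q (2*k+1)"
    using q_Suc_gt[of "2*k-1"] q_Suc_gt[of "2*k"] assms by (simp_all add: Suc_diff_1)
  moreover have "2 \<le> q (2*k - 1)" "2 \<le> q (2*k)" "2 \<le> q (2*k+1)" using q_ge_2 assms by auto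
  ultimately show ?thesis by (auto simp: qq_def)
qed

lemma qq_double:
  assumes "1 \<le> k"
  shows "2 * qq q c k \<le> qq q c (Suc k)"
proof -
  have "4 * q (2*k) < q (Suc (2*k))" "4 * q (Suc (2*k)) < q (Suc (Suc (2*k)))"
    "4 * q (Suc (Suc (2*k))) < q (Suc (Suc (Suc (2*k))))"
    using q_Suc_gt[of "2*k"] q_Suc_gt[of "Suc (2*k)"] q_Suc_gt[of "Suc (Suc (2*k))"] assms by simp_all
  moreover have "2 \<le> q (2*k)" "2 \<le> q (2*k+1)" using q_ge_2 assms by auto
  ultimately show ?thesis by (auto simp: qq_def)
qed

lemma qq_less: "1 \<le> k \<Longrightarrow> k < l \<Longrightarrow> qq q c k < qq q c l"
proof (induction l)
  case (Suc l)
  have "qq q c l < qq q c (Suc l)" using qq_double[of l c] qq_ge_2[of l c] Suc.prems by simp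
  then show ?case using Suc by (metis less_Suc_eq order.strict_trans)
qed simp

lemma qq_less_iff: "1 \<le> k \<Longrightarrow> 1 \<le> l \<Longrightarrow> qq q c k < qq q c l \<longleftrightarrow> k < l"
  by (metis qq_less linorder_neqE_nat order_less_asym)

lemma qq_le_iff: "1 \<le> k \<Longrightarrow> 1 \<le> l \<Longrightarrow> qq q c k \<le> qq q c l \<longleftrightarrow> k \<le> l"
  by (meson qq_less_iff not_le)

lemma two_pow_le_qq: "1 \<le> k \<Longrightarrow> 2 ^ k \<le> qq q c k"
proof (induction k rule: dec_induct)
  case (step n)
  then show ?case using qq_double[of n c] by simp
qed (use qq_ge_2[of 1 c] in simp)

lemma qq_le_imp_le: "1 \<le> k \<Longrightarrow> qq q c k \<le> n \<Longrightarrow> k \<le> n"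
  using two_pow_le_qq[of k c] by (auto intro: two_pow_le_imp_le order_trans)

lemma qq_le_sum: "qq q c k \<le> q (2*k) + q (2*k+1)"
  by (auto simp: qq_def)

lemma block_unique:
  assumes "1 \<le> k" "1 \<le> k'" "qq q c k \<le> n" "n < qq q c (Suc k)" "qq q c k' \<le> n" "n < qq q c (Suc k')"
  shows "k = k'"
proof (rule ccontr)
  assume "k \<noteq> k'"
  then have "Suc k \<le> k' \<or> Suc k' \<le> k" by linarith
  then have "qq q c (Suc k) \<le> qq q c k' \<or> qq q c (Suc k') \<le> qq q c k"
    using qq_le_iff[of "Suc k" k' c] qq_le_iff[of "Suc k'" k c] assms(1,2) by auto
  with assms(3-6) show False by linarith
qed

lemma block_exists:
  assumes "qq q c 1 \<le> n"
  obtains k where "1 \<le> k" "qq q c k \<le> n" "n < qq q c (Suc k)"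
proof -
  let ?S = "{k. 1 \<le> k \<and> qq q c k \<le> n}"
  have "?S \<subseteq> {..n}" by (auto intro: qq_le_imp_le)
  then have fin: "finite ?S" by (rule finite_subset) simp
  moreover have "1 \<in> ?S" using assms by simp
  ultimately have "Max ?S \<in> ?S" by (intro Max_in) auto
  moreover have "Suc (Max ?S) \<notin> ?S" using Max_ge[OF fin, of "Suc (Max ?S)"] by auto
  ultimately show ?thesis using that by auto
qed

lemma sum_block_part_eq:
  assumes "finite F" "\<forall>k\<in>F. 1 \<le> k" "k \<in> F" "qq q c k \<le> n" "n < qq q c (Suc k)"
  shows "(\<Sum>k'\<in>F. block_part q c k' y n) = y n"
proof -
  have "(\<Sum>k'\<in>F. block_part q c k' y n) = block_part q c k y n + (\<Sum>k'\<in>F - {k}. block_part q c k' y n)"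
    using assms(1,3) by (rule sum.remove)
  also have "(\<Sum>k'\<in>F - {k}. block_part q c k' y n) = 0"
    using assms block_unique[of k _ c n] by (intro sum.neutral) (auto simp: block_part_def)
  finally show ?thesis using assms by (simp add: block_part_def)
qed

lemma PP_trit: "y \<in> PP q c \<Longrightarrow> y n \<in> {-1, 0, 1}"
  by (auto simp: PP_def trits1_def)

lemma PP_zero_below: "y \<in> PP q c \<Longrightarrow> n < qq q c 1 \<Longrightarrow> y n = 0"
  by (cases n) (auto simp: PP_def trits1_def)

lemma PP_on_block:
  assumes "y \<in> PP q c" "1 \<le> k"
  obtains p where "\<forall>n. qq q c k \<le> n \<longrightarrow> n < qq q c (Suc k) \<longrightarrow> y n = shr p (sk q c k) n"
proof -
  obtain p where p: "restr y (qq q c k) (qq q c (Suc k) - 1) = restr (shr p (sk q c k)) (qq q c k) (qq q c (Suc k) - 1)"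
    using assms by (auto simp: PP_def RR_def)
  have "Suc (qq q c (Suc k) - 1) = qq q c (Suc k)" using qq_ge_2[of "Suc k" c] by simp
  then have "map y [qq q c k..<qq q c (Suc k)] = map (shr p (sk q c k)) [qq q c k..<qq q c (Suc k)]"
    using p by (simp add: restr_def)
  then show ?thesis using that by (auto simp: map_eq_conv)
qed

lemma shr_sk_eq:
  assumes "1 \<le> k"
  shows "shr p (sk q c k) n = (if n mod qq q c k = p mod qq q c k \<and> p + qq q c k \<le> n
      \<and> n \<le> p + 2 * LL q c k * qq q c k then (if n \<le> p + LL q c k * qq q c k then 1 else -1) else 0)"
proof -
  define Q where "Q = qq q c k"
  define L where "L = LL q c k"
  have Q: "2 \<le> Q" using qq_ge_2[OF assms] by (simp add: Q_def)
  show ?thesis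
  proof (cases "n \<le> p")
    case True
    then show ?thesis using Q by (auto simp: shr_def Q_def[symmetric])
  next
    case False
    define m where "m = n - p"
    have dvd: "Q dvd m \<longleftrightarrow> n mod Q = p mod Q"
      using mod_eq_dvd_iff_nat[of p n Q] False by (simp add: m_def)
    have "shr p (sk q c k) n = sk q c k m" using False by (simp add: shr_def m_def)
    also have "\<dots> = (if Q dvd m \<and> Q \<le> m \<and> m \<le> 2 * L * Q then (if m \<le> L * Q then 1 else -1) else 0)"
    proof (cases "Q dvd m")
      case True
      then obtain j where "m = Q * j" by auto
      then show ?thesis using True Q unfolding sk_def Q_def[symmetric] L_def[symmetric]
        by (auto simp: mult.commute)
    qed (simp add: sk_def Q_def)
    finally show ?thesis using False dvd unfolding Q_def[symmetric] L_def[symmetric] m_def by auto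
  qed
qed

lemma block_part_eq_progression:
  assumes "y \<in> PP q c" "1 \<le> k"
  obtains p where "\<And>n. block_part q c k y n =
    (if n mod qq q c k = p mod qq q c k \<and> p + qq q c k \<le> n \<and> n \<le> min (qq q c (Suc k) - 1) (p + 2 * LL q c k * qq q c k)
     then (if n \<le> p + LL q c k * qq q c k then 1 else -1) else 0)"
proof -
  obtain p where p: "\<forall>n. qq q c k \<le> n \<longrightarrow> n < qq q c (Suc k) \<longrightarrow> y n = shr p (sk q c k) n"
    using PP_on_block[OF assms] by blast
  have "1 \<le> qq q c (Suc k)" using qq_ge_2[of "Suc k" c] by simp
  with p shr_sk_eq[OF assms(2), where p = p and c = c] show ?thesis
    by (intro that) (auto simp: block_part_def)
qed

lemma block_part_window_progression:
  assumes "y \<in> PP q c" "1 \<le> k"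
  shows "\<exists>\<theta>\<in>progression_params M. \<forall>t. 1 \<le> t \<longrightarrow> t \<le> M \<longrightarrow>
     block_part q c k y (a+t) = signed_progression \<theta> t"
proof -
  obtain p where p: "\<And>n. block_part q c k y n =
    (if n mod qq q c k = p mod qq q c k \<and> p + qq q c k \<le> n \<and> n \<le> min (qq q c (Suc k) - 1) (p + 2 * LL q c k * qq q c k)
     then (if n \<le> p + LL q c k * qq q c k then 1 else -1) else 0)"
    using block_part_eq_progression[OF assms] by blast
  have "1 \<le> qq q c k" using qq_ge_2[OF assms(2), of c] by simp
  then show ?thesis
    unfolding p by (rule shifted_signed_progression)
qed

lemma abs_sum_block_part_le:
  assumes "y \<in> PP q c" "1 \<le> k"
  shows "\<bar>\<Sum>t\<in>{1..i}. real_of_int (block_part q c k y (a+t))\<bar> \<le> real i / real (qq q c k) + 1"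
proof -
  obtain p where p: "\<And>n. block_part q c k y n =
    (if n mod qq q c k = p mod qq q c k \<and> p + qq q c k \<le> n \<and> n \<le> min (qq q c (Suc k) - 1) (p + 2 * LL q c k * qq q c k)
     then (if n \<le> p + LL q c k * qq q c k then 1 else -1) else 0)"
    using block_part_eq_progression[OF assms] by blast
  have "\<bar>real_of_int (block_part q c k y n)\<bar> \<le> 1" for n
    using PP_trit[OF assms(1), of n] by (auto simp: block_part_def)
  then have "\<bar>\<Sum>t\<in>{1..i}. real_of_int (block_part q c k y (a+t))\<bar>
      \<le> card {t\<in>{1..i}. real_of_int (block_part q c k y (a+t)) \<noteq> 0}"
    by (intro abs_sum_le_card_nonzero) auto
  also have "card {t\<in>{1..i}. real_of_int (block_part q c k y (a+t)) \<noteq> 0}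
      \<le> card {t\<in>{1..i}. (a + t) mod qq q c k = p mod qq q c k}"
    by (intro card_mono) (auto simp: p)
  also have "\<dots> \<le> i div qq q c k + 1"
    using qq_ge_2[OF assms(2), of c] by (intro card_residue_class_le) simp
  finally have "\<bar>\<Sum>t\<in>{1..i}. real_of_int (block_part q c k y (a+t))\<bar> \<le> real (i div qq q c k) + 1"
    by simp
  moreover have "real (i div qq q c k) \<le> real i / real (qq q c k)" by (rule of_nat_div_le_of_nat)
  ultimately show ?thesis by linarith
qed

lemma finite_blocks_meeting_window:
  "finite {k. 1 \<le> k \<and> qq q c k \<le> a + M \<and> a + 1 < qq q c (Suc k)}"
proof (rule finite_subset)
  show "{k. 1 \<le> k \<and> qq q c k \<le> a + M \<and> a + 1 < qq q c (Suc k)} \<subseteq> {..a + M}"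
    by (auto intro: qq_le_imp_le)
qed simp

text \<open>Only the first and the last block meeting a window can stick out of it; a block in
  between lies inside the window, and its length is at least qq q c k \<ge> 2^k.\<close>

lemma two_pow_le_if_between_blocks:
  assumes "1 \<le> m" "m < k" "k < x" "a + 1 < qq q c (Suc m)" "qq q c x \<le> a + M"
  shows "2 ^ k \<le> M"
proof -
  have "qq q c (Suc m) \<le> qq q c k" "qq q c (Suc k) \<le> qq q c x"
    using qq_le_iff[of "Suc m" k c] qq_le_iff[of "Suc k" x c] assms(1-3) by simp_all
  moreover have "2 * qq q c k \<le> qq q c (Suc k)" using qq_double[of k c] assms(1,2) by simp
  ultimately have "qq q c k \<le> M" using assms(4,5) by linarith
  then show ?thesis using two_pow_le_qq[of k c] assms(1,2) by simp
qed

lemma card_blocks_meeting_window: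
  "card {k. 1 \<le> k \<and> qq q c k \<le> a + M \<and> a + 1 < qq q c (Suc k)} \<le> dyadic_scales M + 2"
proof -
  define T where "T = {k. 1 \<le> k \<and> qq q c k \<le> a + M \<and> a + 1 < qq q c (Suc k)}"
  have fin: "finite T" unfolding T_def by (rule finite_blocks_meeting_window)
  have "card T \<le> dyadic_scales M + 2"
  proof (cases "T = {}")
    case False
    define m where "m = Min T"
    define x where "x = Max T"
    have mT: "m \<in> T" and xT: "x \<in> T" using fin False by (auto simp: m_def x_def)
    have "T \<subseteq> {k. 1 \<le> k \<and> 2 ^ k \<le> M} \<union> {m, x}"
    proof
      fix k assume kT: "k \<in> T"
      then have "m \<le> k" "k \<le> x" using fin by (auto simp: m_def x_def)
      with kT mT xT two_pow_le_if_between_blocks[of m k x a c M]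
      show "k \<in> {k. 1 \<le> k \<and> 2 ^ k \<le> M} \<union> {m, x}"
        by (cases "k = m \<or> k = x") (auto simp: T_def)
    qed
    then have "card T \<le> card ({k. 1 \<le> k \<and> 2 ^ k \<le> M} \<union> {m, x})"
      using finite_dyadic_scales by (intro card_mono) auto
    also have "\<dots> \<le> dyadic_scales M + card {m, x}"
      unfolding dyadic_scales_def by (rule card_Un_le)
    also have "card {m, x} \<le> 2" by (cases "m = x") auto
    finally show ?thesis by simp
  qed simp
  then show ?thesis by (simp add: T_def)
qed

lemma window_blocks:
  assumes y: "y \<in> PP q c"
  obtains T where "finite T" "card T \<le> dyadic_scales M + 2" "\<forall>k\<in>T. 1 \<le> k"
    "\<forall>t. 1 \<le> t \<longrightarrow> t \<le> M \<longrightarrow> y (a+t) = (\<Sum>k\<in>T. block_part q c k y (a+t))"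
proof -
  define T where "T = {k. 1 \<le> k \<and> qq q c k \<le> a + M \<and> a + 1 < qq q c (Suc k)}"
  have fin: "finite T" unfolding T_def by (rule finite_blocks_meeting_window)
  have "y (a+t) = (\<Sum>k\<in>T. block_part q c k y (a+t))" if t: "1 \<le> t" "t \<le> M" for t
  proof (cases "a + t < qq q c 1")
    case True
    have "qq q c 1 \<le> qq q c k" if "k \<in> T" for k using that qq_le_iff[of 1 k c] by (simp add: T_def)
    with True show ?thesis using PP_zero_below[OF y True] by (auto simp: block_part_def intro!: sum.neutral)
  next
    case False
    then have "qq q c 1 \<le> a + t" by simp
    then obtain k where "1 \<le> k" "qq q c k \<le> a+t" "a+t < qq q c (Suc k)" by (rule block_exists)
    moreover from this have "k \<in> T" using t by (simp add: T_def)
    ultimately show ?thesis using fin by (intro sum_block_part_eq[symmetric]) (auto simp: T_def)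
  qed
  then show ?thesis
    using that fin card_blocks_meeting_window[of c a M] by (auto simp: T_def)
qed

lemma window_progression_list:
  assumes y: "y \<in> PP q c"
  obtains ls where "length ls = dyadic_scales M + 2" "set ls \<subseteq> progression_params M"
    "\<forall>t. 1 \<le> t \<longrightarrow> t \<le> M \<longrightarrow> y (a+t) = sum_list (map (\<lambda>\<theta>. signed_progression \<theta> t) ls)"
proof -
  obtain T where fin: "finite T" and card: "card T \<le> dyadic_scales M + 2" and pos: "\<forall>k\<in>T. 1 \<le> k"
    and sum: "\<forall>t. 1 \<le> t \<longrightarrow> t \<le> M \<longrightarrow> y (a+t) = (\<Sum>k\<in>T. block_part q c k y (a+t))"
    using window_blocks[OF y] by blast
  have "\<forall>k\<in>T. \<exists>\<theta>\<in>progression_params M.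
      \<forall>t. 1 \<le> t \<longrightarrow> t \<le> M \<longrightarrow> block_part q c k y (a+t) = signed_progression \<theta> t"
    using block_part_window_progression[OF y] pos by blast
  then obtain \<theta> where \<theta>: "\<forall>k\<in>T. \<theta> k \<in> progression_params M \<and>
      (\<forall>t. 1 \<le> t \<longrightarrow> t \<le> M \<longrightarrow> block_part q c k y (a+t) = signed_progression (\<theta> k) t)"
    by metis
  \<comment> \<open>padding with a progression that starts beyond the window\<close>
  define ls where "ls = map \<theta> (sorted_list_of_set T) @ replicate (dyadic_scales M + 2 - card T) (1, 0, M+1, 0, 0)"
  have "y (a+t) = sum_list (map (\<lambda>\<theta>. signed_progression \<theta> t) ls)" if t: "1 \<le> t" "t \<le> M" for t
  proof -
    have "sum_list (map (\<lambda>\<theta>. signed_progression \<theta> t) ls) = (\<Sum>k\<in>T. signed_progression (\<theta> k) t)"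
      using t fin by (simp add: ls_def o_def sum_list_replicate signed_progression_def
          sum_list_distinct_conv_sum_set)
    also have "\<dots> = (\<Sum>k\<in>T. block_part q c k y (a+t))" using \<theta> t by (intro sum.cong) auto
    finally show ?thesis using sum t by simp
  qed
  moreover have "length ls = dyadic_scales M + 2" using card fin by (simp add: ls_def)
  moreover have "set ls \<subseteq> progression_params M" using \<theta> fin by (auto simp: ls_def progression_params_def)
  ultimately show ?thesis using that by blast
qed

lemma sum_inverse_qq_telescope:
  "1 \<le> k0 \<Longrightarrow> (\<Sum>k\<in>{k0..<k0+j}. 1 / real (qq q c k)) \<le> 2 / real (qq q c k0) - 2 / real (qq q c (k0+j))"
proof (induction j)
  case (Suc j)
  have "0 < real (qq q c (k0+j))" using qq_ge_2[of "k0+j" c] Suc.prems by simp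
  moreover have "2 * real (qq q c (k0+j)) \<le> real (qq q c (Suc (k0+j)))"
    using qq_double[of "k0+j" c] Suc.prems by linarith
  ultimately have "2 / real (qq q c (Suc (k0+j))) \<le> 1 / real (qq q c (k0+j))"
    by (simp add: field_simps)
  then show ?case using Suc by simp
qed simp

lemma sum_inverse_qq_le:
  assumes "finite F" "\<forall>k\<in>F. k0 \<le> k" "1 \<le> k0"
  shows "(\<Sum>k\<in>F. 1 / real (qq q c k)) \<le> 2 / real (qq q c k0)"
proof -
  obtain N where "\<forall>k\<in>F. k < N" using assms(1) by (metis finite_nat_set_iff_bounded)
  then have "F \<subseteq> {k0..<k0+N}" using assms(2) by auto
  then have "(\<Sum>k\<in>F. 1 / real (qq q c k)) \<le> (\<Sum>k\<in>{k0..<k0+N}. 1 / real (qq q c k))"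
    by (intro sum_mono2) auto
  also have "\<dots> \<le> 2 / real (qq q c k0) - 2 / real (qq q c (k0+N))"
    by (rule sum_inverse_qq_telescope[OF assms(3)])
  also have "\<dots> \<le> 2 / real (qq q c k0)" by simp
  finally show ?thesis .
qed

lemma abs_sum_block_part_le_1:
  assumes "y \<in> PP q c" "finite F" "\<forall>k\<in>F. 1 \<le> k"
  shows "\<bar>\<Sum>k\<in>F. real_of_int (block_part q c k y n)\<bar> \<le> 1"
proof (cases "\<exists>k\<in>F. qq q c k \<le> n \<and> n < qq q c (Suc k)")
  case True
  then have "(\<Sum>k\<in>F. block_part q c k y n) = y n" using assms(2,3) sum_block_part_eq by blast
  then show ?thesis using PP_trit[OF assms(1), of n] by (auto simp flip: of_int_sum)
next
  case False
  then have "(\<Sum>k\<in>F. block_part q c k y n) = 0" by (auto simp: block_part_def intro!: sum.neutral)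
  then show ?thesis by (simp flip: of_int_sum)
qed

lemma abs_sum_low_blocks_le:
  assumes "y \<in> PP q c" "finite F" "\<forall>k\<in>F. 1 \<le> k \<and> k < k0"
  shows "\<bar>\<Sum>t\<in>{1..i}. \<Sum>k\<in>F. real_of_int (block_part q c k y (a+t))\<bar> \<le> real (qq q c k0)"
proof -
  have "\<bar>\<Sum>t\<in>{1..i}. \<Sum>k\<in>F. real_of_int (block_part q c k y (a+t))\<bar>
      \<le> (\<Sum>t\<in>{1..i}. if a + t < qq q c k0 then 1 else 0)"
  proof (rule order_trans[OF sum_abs sum_mono])
    fix t
    have "block_part q c k y (a+t) = 0" if "qq q c k0 \<le> a + t" "k \<in> F" for k
      using that assms(3) qq_le_iff[of "Suc k" k0 c] by (auto simp: block_part_def)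
    then show "\<bar>\<Sum>k\<in>F. real_of_int (block_part q c k y (a+t))\<bar> \<le> (if a + t < qq q c k0 then 1 else 0)"
      using abs_sum_block_part_le_1[OF assms(1,2)] assms(3) by auto
  qed
  also have "\<dots> = real (card {t\<in>{1..i}. a + t < qq q c k0})"
    by (simp add: sum.inter_filter[symmetric])
  also have "card {t\<in>{1..i}. a + t < qq q c k0} \<le> card {1..<qq q c k0}"
    by (intro card_mono) auto
  finally show ?thesis by simp
qed

lemma abs_sum_high_blocks_le:
  assumes "y \<in> PP q c" "finite F" "\<forall>k\<in>F. k0 \<le> k" "1 \<le> k0"
  shows "\<bar>\<Sum>k\<in>F. \<Sum>t\<in>{1..i}. real_of_int (block_part q c k y (a+t))\<bar>
    \<le> 2 * real i / real (qq q c k0) + real (card F)"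
proof -
  have "\<bar>\<Sum>k\<in>F. \<Sum>t\<in>{1..i}. real_of_int (block_part q c k y (a+t))\<bar>
      \<le> (\<Sum>k\<in>F. real i * (1 / real (qq q c k)) + 1)"
    using abs_sum_block_part_le[OF assms(1)] assms(3,4)
    by (intro order_trans[OF sum_abs sum_mono]) auto
  also have "\<dots> = real i * (\<Sum>k\<in>F. 1 / real (qq q c k)) + real (card F)"
    by (simp add: sum.distrib sum_distrib_left)
  also have "\<dots> \<le> real i * (2 / real (qq q c k0)) + real (card F)"
    using sum_inverse_qq_le[OF assms(2-4), of c] by (intro add_right_mono mult_left_mono) auto
  finally show ?thesis by (simp add: mult.commute)
qed

lemma abs_partial_sum_PP_le:
  assumes y: "y \<in> PP q c" and k0: "1 \<le> k0"
  shows "\<bar>\<Sum>t\<in>{1..i}. real_of_int (y (a+t))\<bar>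
     \<le> real (qq q c k0) + 2 * real i / real (qq q c k0) + real (dyadic_scales i) + 2"
proof -
  obtain T where fin: "finite T" and card: "card T \<le> dyadic_scales i + 2" and pos: "\<forall>k\<in>T. 1 \<le> k"
    and sum: "\<forall>t. 1 \<le> t \<longrightarrow> t \<le> i \<longrightarrow> y (a+t) = (\<Sum>k\<in>T. block_part q c k y (a+t))"
    using window_blocks[OF y] by blast
  define P where "P k t = real_of_int (block_part q c k y (a+t))" for k t
  define T1 where "T1 = T \<inter> {..<k0}"
  define T2 where "T2 = T - {..<k0}"
  have "(\<Sum>t\<in>{1..i}. real_of_int (y (a+t))) = (\<Sum>t\<in>{1..i}. \<Sum>k\<in>T. P k t)"
    using sum by (intro sum.cong) (auto simp: P_def simp flip: of_int_sum)
  also have "\<dots> = (\<Sum>t\<in>{1..i}. \<Sum>k\<in>T1. P k t) + (\<Sum>t\<in>{1..i}. \<Sum>k\<in>T2. P k t)"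
    using fin unfolding T1_def T2_def by (simp add: sum.Int_Diff[of T _ "{..<k0}"] sum.distrib)
  also have "(\<Sum>t\<in>{1..i}. \<Sum>k\<in>T2. P k t) = (\<Sum>k\<in>T2. \<Sum>t\<in>{1..i}. P k t)" by (rule sum.swap)
  finally have split: "(\<Sum>t\<in>{1..i}. real_of_int (y (a+t)))
      = (\<Sum>t\<in>{1..i}. \<Sum>k\<in>T1. P k t) + (\<Sum>k\<in>T2. \<Sum>t\<in>{1..i}. P k t)" .
  have "\<bar>\<Sum>t\<in>{1..i}. \<Sum>k\<in>T1. P k t\<bar> \<le> real (qq q c k0)"
    unfolding P_def using fin pos by (intro abs_sum_low_blocks_le[OF y]) (auto simp: T1_def)
  moreover have "\<bar>\<Sum>k\<in>T2. \<Sum>t\<in>{1..i}. P k t\<bar> \<le> 2 * real i / real (qq q c k0) + real (card T2)"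
    unfolding P_def using fin k0 by (intro abs_sum_high_blocks_le[OF y]) (auto simp: T2_def)
  moreover have "card T2 \<le> card T" using fin by (intro card_mono) (auto simp: T2_def)
  ultimately show ?thesis unfolding split using card by linarith
qed

end

section \<open>Words and drift in X_i\<close>

definition window_words :: "(nat \<Rightarrow> nat) \<Rightarrow> nat \<Rightarrow> nat \<Rightarrow> int list set" where
  "window_words q c M = {map y [1..<M+1] | y z. (y, z) \<in> XX q c}"

definition drift_bound :: "(nat \<Rightarrow> nat) \<Rightarrow> nat \<Rightarrow> nat \<Rightarrow> real" where
  "drift_bound q n k0 = real (q (2*k0) + q (2*k0+1)) + 2 * real n / 2 ^ k0 + real (dyadic_scales n) + 2"

lemma drift_bound_nonneg: "0 \<le> drift_bound q n k0"
  by (simp add: drift_bound_def)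

context fast_growing
begin

lemma window_words_subset:
  "window_words q c M \<subseteq> (\<lambda>ls. map (\<lambda>t. sum_list (map (\<lambda>\<theta>. signed_progression \<theta> t) ls)) [1..<M+1]) `
     {ls. set ls \<subseteq> progression_params M \<and> length ls = dyadic_scales M + 2}"
proof
  fix w assume "w \<in> window_words q c M"
  then obtain y z where w: "w = map y [1..<M+1]" and yz: "(y, z) \<in> XX q c"
    by (auto simp: window_words_def)
  obtain y0 a where y0: "y0 \<in> PP q c" and ya: "\<forall>t. 1 \<le> t \<longrightarrow> t \<le> M \<longrightarrow> y t = y0 (a + t)"
    using XX_memD(3)[OF yz] by blast
  obtain ls where "length ls = dyadic_scales M + 2" "set ls \<subseteq> progression_params M"
    "\<forall>t. 1 \<le> t \<longrightarrow> t \<le> M \<longrightarrow> y0 (a+t) = sum_list (map (\<lambda>\<theta>. signed_progression \<theta> t) ls)"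
    using window_progression_list[OF y0] by blast
  with w ya show "w \<in> (\<lambda>ls. map (\<lambda>t. sum_list (map (\<lambda>\<theta>. signed_progression \<theta> t) ls)) [1..<M+1]) `
     {ls. set ls \<subseteq> progression_params M \<and> length ls = dyadic_scales M + 2}"
    by (auto intro!: image_eqI[of _ _ ls] map_cong)
qed

lemma finite_window_words: "finite (window_words q c M)"
  by (rule finite_subset[OF window_words_subset])
    (intro finite_imageI finite_lists_length_eq finite_progression_params)

lemma card_window_words_le: "card (window_words q c M) \<le> (M + 2) ^ (5 * (dyadic_scales M + 2))"
proof -
  have "card (window_words q c M) \<le> card {ls. set ls \<subseteq> progression_params M \<and> length ls = dyadic_scales M + 2}"
    by (rule order_trans[OF card_mono[OF _ window_words_subset] card_image_le])
      (intro finite_imageI finite_lists_length_eq finite_progression_params)+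
  also have "\<dots> = ((M + 2) ^ 5) ^ (dyadic_scales M + 2)"
    by (simp add: card_lists_length_eq finite_progression_params card_progression_params)
  finally show ?thesis by (simp only: power_mult)
qed

lemma abs_partial_sum_XX_le:
  assumes yz: "(y, z) \<in> XX q c" and k0: "1 \<le> k0" and i: "i \<le> n"
  shows "\<bar>\<Sum>t\<in>{1..i}. y t\<bar> \<le> \<lceil>drift_bound q n k0\<rceil>"
proof -
  obtain y0 a where y0: "y0 \<in> PP q c" and ya: "\<forall>t. 1 \<le> t \<longrightarrow> t \<le> i \<longrightarrow> y t = y0 (a + t)"
    using XX_memD(3)[OF yz] by blast
  have "real_of_int \<bar>\<Sum>t\<in>{1..i}. y t\<bar> = \<bar>\<Sum>t\<in>{1..i}. real_of_int (y0 (a+t))\<bar>"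
    using ya by (simp add: of_int_sum)
  also have "\<dots> \<le> real (qq q c k0) + 2 * real i / real (qq q c k0) + real (dyadic_scales i) + 2"
    by (rule abs_partial_sum_PP_le[OF y0 k0])
  also have "\<dots> \<le> drift_bound q n k0"
  proof -
    have "(2::real) ^ k0 \<le> real (qq q c k0)"
      using two_pow_le_qq[OF k0, of c] by (metis of_nat_le_iff of_nat_numeral of_nat_power)
    then have "2 * real i / real (qq q c k0) \<le> 2 * real n / 2 ^ k0" using i by (intro frac_le) auto
    moreover have "real (qq q c k0) \<le> real (q (2*k0) + q (2*k0+1))" using qq_le_sum[of c k0] by linarith
    moreover have "real (dyadic_scales i) \<le> real (dyadic_scales n)" using dyadic_scales_mono[OF i] by simp
    ultimately show ?thesis unfolding drift_bound_def by linarith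
  qed
  finally show ?thesis by linarith
qed

end

section \<open>Separated sets of the product system\<close>

definition window_code :: "nat \<Rightarrow> nat \<Rightarrow> zpt \<Rightarrow> int list \<times> int list" where
  "window_code N R p = (map (fst p) [1..<N+1], map (snd p) [-int R..int R])"

lemma card_trit_lists: "card {l. set l \<subseteq> {-1, 0, 1::int} \<and> length l = m} = 3 ^ m"
proof -
  have "card {l. set l \<subseteq> {-1, 0, 1::int} \<and> length l = m} = card {-1, 0, 1::int} ^ m"
    by (rule card_lists_length_eq) simp
  also have "card {-1, 0, 1::int} = 3" by simp
  finally show ?thesis .
qed

context fast_growing
begin

text \<open>After i steps the second coordinate is shifted by y_1 + ... + y_i, which is at most G,
  so agreement of z on [-(G + r), G + r] survives on [-r, r].\<close>

lemma dist_Tmap_funpow_le: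
  assumes p: "p \<in> XX q c" and p': "p' \<in> XX q c" and k0: "1 \<le> k0" and i: "i < n"
    and G: "G = nat \<lceil>drift_bound q n k0\<rceil>"
    and same: "window_code (n + r) (G + r) p = window_code (n + r) (G + r) p'"
  shows "dZ ((Tmap ^^ i) p) ((Tmap ^^ i) p') \<le> (1/3)^(Suc r)"
proof -
  obtain y z y' z' where pp: "p = (y, z)" "p' = (y', z')" by fastforce
  from same have agree_y: "\<forall>t. 1 \<le> t \<longrightarrow> t \<le> n + r \<longrightarrow> y t = y' t"
    and agree_z: "\<forall>m. \<bar>m\<bar> \<le> int (G + r) \<longrightarrow> z m = z' m"
    by (auto simp: window_code_def pp map_eq_conv abs_le_iff)
  have "y 0 = 0" "y' 0 = 0" using XX_memD(1) p p' by (auto simp: pp trits1_def)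
  moreover define s where "s = (\<Sum>t\<in>{1..i}. y t)"
  moreover have "(\<Sum>t\<in>{1..i}. y' t) = s" unfolding s_def using agree_y i by (intro sum.cong) auto
  ultimately have T: "(Tmap ^^ i) p = ((\<lambda>m. if m = 0 then 0 else y (m + i)), shl2 s z)"
      "(Tmap ^^ i) p' = ((\<lambda>m. if m = 0 then 0 else y' (m + i)), shl2 s z')"
    by (simp_all add: pp Tmap_funpow)
  have "\<bar>s\<bar> \<le> int G"
    using abs_partial_sum_XX_le[of y z c k0 i n] p k0 i drift_bound_nonneg[of q n k0]
    by (simp add: s_def pp G)
  then have "d2 (shl2 s z) (shl2 s z') \<le> (1/3)^(Suc r)"
    using agree_z by (intro d2_le_pow_if_eq_within) (auto simp: shl2_def)
  moreover have "d1 (\<lambda>m. if m = 0 then 0 else y (m + i)) (\<lambda>m. if m = 0 then 0 else y' (m + i))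
      \<le> (1/3)^(Suc r)"
    using agree_y i by (intro d1_le_pow_if_eq_upto) auto
  ultimately show ?thesis unfolding T dZ_def by simp
qed

lemma window_code_mem:
  assumes "p \<in> XX q c"
  shows "window_code N R p \<in> window_words q c N \<times> {l. set l \<subseteq> {-1, 0, 1} \<and> length l = 2 * R + 1}"
proof (cases p)
  case (Pair y z)
  with assms XX_memD(2)[of y z q c] show ?thesis
    by (auto simp: window_code_def window_words_def trits2_def)
qed

lemma max_sep_Xhat_le:
  assumes r: "(1/3::real)^(Suc r) \<le> \<epsilon>" and k0: "1 \<le> k0"
  shows "max_sep dX That (Xhat q) n \<epsilon> \<le>
    4 * ((n + r + 2) ^ (5 * (dyadic_scales (n + r) + 2)) * 3 ^ (2 * (nat \<lceil>drift_bound q n k0\<rceil> + r) + 1)) ^ 4"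
proof -
  define G where "G = nat \<lceil>drift_bound q n k0\<rceil>"
  define W where "W = window_code (n + r) (G + r)"
  define C where "C c = window_words q c (n + r) \<times> {l. set l \<subseteq> {-1, 0, 1::int} \<and> length l = 2 * (G + r) + 1}" for c
  define B where "B = (n + r + 2) ^ (5 * (dyadic_scales (n + r) + 2)) * 3 ^ (2 * (G + r) + 1)"
  define \<phi> where "\<phi> x = (case x of (a, b, c, e, j) \<Rightarrow> (j, W a, W b, W c, W e))" for x :: xpt
  have fin: "finite (C c)" for c
    unfolding C_def by (intro finite_cartesian_product finite_window_words finite_lists_length_eq) simp
  have card: "card (C c) \<le> B" for c
    unfolding C_def B_def card_cartesian_product card_trit_lists
    using card_window_words_le[of c "n + r"] by (rule mult_le_mono1)
  have W_mem: "W p \<in> C c" if "p \<in> XX q c" for p c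
    unfolding W_def C_def by (rule window_code_mem[OF that])
  have "max_sep dX That (Xhat q) n \<epsilon> \<le> card ({0..3::nat} \<times> C 0 \<times> C 1 \<times> C 2 \<times> C 3)"
  proof (rule max_sep_le_card_code[where \<phi> = \<phi>])
    show "\<phi> ` Xhat q \<subseteq> {0..3::nat} \<times> C 0 \<times> C 1 \<times> C 2 \<times> C 3"
      using W_mem by (auto simp: \<phi>_def Xhat_def)
    fix x x' i assume x: "x \<in> Xhat q" "x' \<in> Xhat q" and same: "\<phi> x = \<phi> x'" and i: "i < n"
    obtain a b c e j a' b' c' e' j' where xs: "x = (a, b, c, e, j)" "x' = (a', b', c', e', j')"
      by (metis prod_cases5)
    have "a \<in> XX q 0" "b \<in> XX q 1" "c \<in> XX q 2" "e \<in> XX q 3"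
      "a' \<in> XX q 0" "b' \<in> XX q 1" "c' \<in> XX q 2" "e' \<in> XX q 3"
      using x unfolding xs Xhat_def by simp_all
    moreover have "j = j'" "W a = W a'" "W b = W b'" "W c = W c'" "W e = W e'"
      using same unfolding xs \<phi>_def by simp_all
    ultimately have "dZ ((Tmap ^^ i) a) ((Tmap ^^ i) a') \<le> (1/3)^(Suc r)"
      "dZ ((Tmap ^^ i) b) ((Tmap ^^ i) b') \<le> (1/3)^(Suc r)"
      "dZ ((Tmap ^^ i) c) ((Tmap ^^ i) c') \<le> (1/3)^(Suc r)"
      "dZ ((Tmap ^^ i) e) ((Tmap ^^ i) e') \<le> (1/3)^(Suc r)" and "j = j'"
      using dist_Tmap_funpow_le[OF _ _ k0 i G_def] unfolding W_def by blast+
    moreover have "0 \<le> \<epsilon>" using r zero_le_power[of "1/3::real" "Suc r"] by linarith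
    ultimately show "dX ((That ^^ i) x) ((That ^^ i) x') \<le> \<epsilon>"
      using r unfolding xs That_funpow dX_def by simp
  qed (use fin in simp)
  also have "\<dots> \<le> 4 * (B * (B * (B * B)))"
    unfolding card_cartesian_product using card by (intro mult_le_mono le_refl) auto
  finally show ?thesis by (simp add: B_def G_def power4_eq_xxxx mult.assoc)
qed

lemma ln_max_sep_Xhat_le:
  assumes r: "(1/3::real)^(Suc r) \<le> \<epsilon>" and k0: "1 \<le> k0" and n: "1 \<le> n"
  shows "ln (real (max_sep dX That (Xhat q) n \<epsilon>)) / real n \<le>
    (131 + 16 * real (q (2*k0) + q (2*k0+1)) + 16 * real r + 112 * (ln (real (n + (r + 2))))^2) / real n
    + 32 / 2 ^ k0"
proof -
  define H where "H = real (q (2*k0) + q (2*k0+1))"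
  define L where "L = ln (real (n + (r + 2)))"
  define X where "X = real n / 2 ^ k0"
  define p where "p = 5 * (dyadic_scales (n + r) + 2)"
  define s where "s = 2 * (nat \<lceil>drift_bound q n k0\<rceil> + r) + 1"
  define N where "N = 4 * ((n + r + 2) ^ p * 3 ^ s) ^ 4"
  have "max_sep dX That (Xhat q) n \<epsilon> \<le> N"
    using max_sep_Xhat_le[OF r k0, of n] by (simp add: N_def p_def s_def)
  moreover have "0 < N" by (simp add: N_def)
  ultimately have "ln (real (max_sep dX That (Xhat q) n \<epsilon>)) \<le> ln (real N)"
    by (cases "max_sep dX That (Xhat q) n \<epsilon> = 0") simp_all
  also have "ln (real N) = ln 4 + 4 * (real p * L + real s * ln 3)"
    by (simp add: N_def L_def ln_mult ln_realpow add.assoc)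
  finally have ln_max_sep: "ln (real (max_sep dX That (Xhat q) n \<epsilon>)) \<le> ln 4 + 4 * (real p * L + real s * ln 3)" .
  have "0 \<le> (L - 1/2)^2" by simp
  then have L: "0 \<le> L" "L \<le> 1 + L^2" by (simp_all add: L_def power2_eq_square algebra_simps)
  have logs: "ln (4::real) \<le> 3" "0 \<le> ln (3::real)" "ln (3::real) \<le> 2"
    using ln_le_minus_one[of 4] ln_le_minus_one[of 3] by auto
  have "ln (real (n + r)) \<le> L" "ln (real n) \<le> L" using n by (simp_all add: L_def)
  then have "real (dyadic_scales (n + r)) \<le> 2 * L" "real (dyadic_scales n) \<le> 2 * L"
    using dyadic_scales_le_ln[of "n + r"] dyadic_scales_le_ln[of n] n by auto
  moreover have "real_of_int \<lceil>drift_bound q n k0\<rceil> \<le> drift_bound q n k0 + 1" by linarith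
  moreover have "0 \<le> \<lceil>drift_bound q n k0\<rceil>" using drift_bound_nonneg[of q n k0] by simp
  ultimately have p: "real p \<le> 10 * L + 10" and s: "real s \<le> 2 * H + 4 * X + 4 * L + 2 * real r + 7"
    unfolding p_def s_def drift_bound_def H_def X_def by (simp_all add: of_nat_nat)
  have "real p * L \<le> (10 * L + 10) * L" using p L by (intro mult_right_mono) auto
  moreover have "real s * ln 3 \<le> real s * 2" using logs by (intro mult_left_mono) auto
  ultimately have "ln (real (max_sep dX That (Xhat q) n \<epsilon>)) \<le> (131 + 16 * H + 16 * real r + 112 * L^2) + 32 * X"
    using ln_max_sep L logs s by (simp add: algebra_simps power2_eq_square)
  then have "ln (real (max_sep dX That (Xhat q) n \<epsilon>)) / real n
      \<le> ((131 + 16 * H + 16 * real r + 112 * L^2) + 32 * X) / real n"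
    by (rule divide_right_mono) simp
  also have "\<dots> = (131 + 16 * H + 16 * real r + 112 * L^2) / real n + 32 / 2 ^ k0"
    using n by (simp add: X_def add_divide_distrib)
  finally show ?thesis by (simp add: H_def L_def)
qed

lemma eventually_ln_max_sep_Xhat_le:
  assumes "0 < \<epsilon>" "0 < \<delta>"
  shows "eventually (\<lambda>n. ln (real (max_sep dX That (Xhat q) n \<epsilon>)) / real n \<le> \<delta>) sequentially"
proof -
  obtain r where "(1/3::real)^r < \<epsilon>" using real_arch_pow_inv[OF assms(1), of "1/3"] by auto
  then have r: "(1/3::real)^(Suc r) \<le> \<epsilon>"
    using power_decreasing[of r "Suc r" "1/3::real"] by linarith
  obtain k where "(1/2::real)^k < \<delta> / 64" using real_arch_pow_inv[of "\<delta> / 64" "1/2"] assms(2) by auto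
  then have k0: "32 / 2 ^ Suc k \<le> \<delta> / 2" by (simp add: power_one_over field_simps)
  have half: "0 < \<delta> / 2" using assms(2) by simp
  show ?thesis
    using eventually_ln_sq_div_le[OF half, where c = "r + 2" and B = 112
        and A = "131 + 16 * real (q (2 * Suc k) + q (2 * Suc k + 1)) + 16 * real r"]
      eventually_ge_at_top[of 1]
  proof eventually_elim
    case (elim n)
    have "1 \<le> Suc k" by simp
    from ln_max_sep_Xhat_le[OF r this elim(2)] elim(1) k0 show ?case by linarith
  qed
qed

end

theorem mainTheorem9:
  fixes \<tau> :: "nat \<Rightarrow> real" and q :: "nat \<Rightarrow> nat"
  assumes tau_pos: "\<forall>n\<ge>1. \<tau> n > 0"
    and tau_mono: "\<forall>m n. 1 \<le> m \<longrightarrow> m \<le> n \<longrightarrow> \<tau> n \<le> \<tau> m"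
    and tau_lim: "\<tau> \<longlonglongrightarrow> 0"
    and q1: "2 \<le> q 1"
    and q_incr: "\<forall>k\<ge>1. q k < q (Suc k)"
    and q_growth: "\<forall>k\<ge>1. q (Suc k) > q k ^ 4 + 3 * q k"
    and q_tau: "\<forall>k\<ge>1. \<tau> (nat \<lceil>real (q (Suc k)) / 3\<rceil>) < 1 / (16 * real (q k))"
  shows "topological_entropy dX That (Xhat q) = 0"
proof -
  \<comment> \<open>Only the growth of q matters for the entropy.\<close>
  interpret fast_growing q
  proof
    fix k :: nat assume "1 \<le> k"
    moreover have "q k \<le> q k ^ 4" by (cases "q k") (auto intro: self_le_power)
    ultimately show "4 * q k < q (Suc k)" using q_growth by fastforce
  qed (rule q1)
  show ?thesis
    by (rule topological_entropy_eq_0I) (rule eventually_ln_max_sep_Xhat_le)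
qed

end
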